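(* For every $n\in\mathbb{N}$, the set $ISD(\mathbb{R}^n)$, equipped with pointwise addition, pointwise multiplication, pointwise $\min$ (as $\wedge$) and pointwise $\max$ (as $\vee$), is an $f$-ring. In particular it is closed under pointwise sums and products.
   Context: $ISD(\mathbb{R}^n)$ is the smallest set of functions $\mathbb{R}^n \to \mathbb{R}$ containing all real polynomials in $n$ variables and closed under pointwise $\min$ and $\max$. An $\ell$-ring is a ring with identity (commutative addition) that is also a lattice with operations $\wedge,\vee$ (with $f\le g$ meaning $f\wedge g=f$) such that $f\le g$ implies $h+f\le h+g$ for all $h$, and $f,g\ge0$ implies $fg\ge0$. An $f$-ring is an $\ell$-ring such that whenever $f,g,h\ge0$ and $g\wedge h=0$, one has $fg\wedge h=0$ and $gf\wedge h=0$. *)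

theory Defs
  imports Complex_Main
begin

text \<open>Points of R^n are represented as maps nat => real, of which only the
  coordinates 0..n-1 are used.\<close>

inductive_set poly_fun :: "nat \<Rightarrow> ((nat \<Rightarrow> real) \<Rightarrow> real) set" for n :: nat where
  const: "(\<lambda>x. c) \<in> poly_fun n"
| var: "i < n \<Longrightarrow> (\<lambda>x. x i) \<in> poly_fun n"
| add: "p \<in> poly_fun n \<Longrightarrow> q \<in> poly_fun n \<Longrightarrow> (\<lambda>x. p x + q x) \<in> poly_fun n"
| mult: "p \<in> poly_fun n \<Longrightarrow> q \<in> poly_fun n \<Longrightarrow> (\<lambda>x. p x * q x) \<in> poly_fun n"

inductive_set ISD :: "nat \<Rightarrow> ((nat \<Rightarrow> real) \<Rightarrow> real) set" for n :: nat where
  poly: "p \<in> poly_fun n \<Longrightarrow> p \<in> ISD n"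
| min: "f \<in> ISD n \<Longrightarrow> g \<in> ISD n \<Longrightarrow> (\<lambda>x. min (f x) (g x)) \<in> ISD n"
| max: "f \<in> ISD n \<Longrightarrow> g \<in> ISD n \<Longrightarrow> (\<lambda>x. max (f x) (g x)) \<in> ISD n"

definition l_ring ::
  "'a set \<Rightarrow> ('a \<Rightarrow> 'a \<Rightarrow> 'a) \<Rightarrow> ('a \<Rightarrow> 'a \<Rightarrow> 'a) \<Rightarrow> 'a \<Rightarrow> 'a \<Rightarrow> ('a \<Rightarrow> 'a)
   \<Rightarrow> ('a \<Rightarrow> 'a \<Rightarrow> 'a) \<Rightarrow> ('a \<Rightarrow> 'a \<Rightarrow> 'a) \<Rightarrow> bool" where
  "l_ring S add mul zero one neg meet join \<longleftrightarrow>
     \<comment> \<open>closure\<close>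
     zero \<in> S \<and> one \<in> S \<and>
     (\<forall>f\<in>S. neg f \<in> S) \<and>
     (\<forall>f\<in>S. \<forall>g\<in>S. add f g \<in> S \<and> mul f g \<in> S \<and> meet f g \<in> S \<and> join f g \<in> S) \<and>
     \<comment> \<open>ring with identity\<close>
     (\<forall>f\<in>S. \<forall>g\<in>S. \<forall>h\<in>S. add (add f g) h = add f (add g h)) \<and>
     (\<forall>f\<in>S. \<forall>g\<in>S. add f g = add g f) \<and>
     (\<forall>f\<in>S. add zero f = f) \<and>
     (\<forall>f\<in>S. add (neg f) f = zero) \<and>
     (\<forall>f\<in>S. \<forall>g\<in>S. \<forall>h\<in>S. mul (mul f g) h = mul f (mul g h)) \<and>
     (\<forall>f\<in>S. mul one f = f \<and> mul f one = f) \<and>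
     (\<forall>f\<in>S. \<forall>g\<in>S. \<forall>h\<in>S. mul f (add g h) = add (mul f g) (mul f h)
                          \<and> mul (add f g) h = add (mul f h) (mul g h)) \<and>
     \<comment> \<open>lattice\<close>
     (\<forall>f\<in>S. \<forall>g\<in>S. meet f g = meet g f \<and> join f g = join g f) \<and>
     (\<forall>f\<in>S. \<forall>g\<in>S. \<forall>h\<in>S. meet (meet f g) h = meet f (meet g h)
                          \<and> join (join f g) h = join f (join g h)) \<and>
     (\<forall>f\<in>S. \<forall>g\<in>S. meet f (join f g) = f \<and> join f (meet f g) = f) \<and>
     \<comment> \<open>order f \<le> g iff meet f g = f; compatibility with + and positivity of products\<close>
     (\<forall>f\<in>S. \<forall>g\<in>S. \<forall>h\<in>S. meet f g = f \<longrightarrow> meet (add h f) (add h g) = add h f) \<and>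
     (\<forall>f\<in>S. \<forall>g\<in>S. meet zero f = zero \<and> meet zero g = zero \<longrightarrow> meet zero (mul f g) = zero)"

definition f_ring ::
  "'a set \<Rightarrow> ('a \<Rightarrow> 'a \<Rightarrow> 'a) \<Rightarrow> ('a \<Rightarrow> 'a \<Rightarrow> 'a) \<Rightarrow> 'a \<Rightarrow> 'a \<Rightarrow> ('a \<Rightarrow> 'a)
   \<Rightarrow> ('a \<Rightarrow> 'a \<Rightarrow> 'a) \<Rightarrow> ('a \<Rightarrow> 'a \<Rightarrow> 'a) \<Rightarrow> bool" where
  "f_ring S add mul zero one neg meet join \<longleftrightarrow>
     l_ring S add mul zero one neg meet join \<and>
     (\<forall>f\<in>S. \<forall>g\<in>S. \<forall>h\<in>S.
        meet zero f = zero \<and> meet zero g = zero \<and> meet zero h = zero \<and> meet g h = zero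
        \<longrightarrow> meet (mul f g) h = zero \<and> meet (mul g f) h = zero)"

end

(* Closure under sums is easy, since translation commutes with min and max.  For products the
   obstacle is that p * min c d is min (p c) (p d) where p >= 0 and max (p c) (p d) where p < 0,
   and the sign of p varies.  But every f in ISD is dominated in absolute value by a polynomial B,
   and with such a B for c and d the sign-dependent choice is the median of p c, p d and - p B,
   a min/max expression in functions already known to lie in ISD.  Induction on the min/max
   structure then gives closure under products; the f-ring axioms hold pointwise in R. *)

theory Submission
  imports Defs
begin

definition median3 :: "'a::linorder \<Rightarrow> 'a \<Rightarrow> 'a \<Rightarrow> 'a" where
  "median3 a b c = max (min a b) (min (max a b) c)"

lemma median3_eq_min: "k \<le> min a b \<Longrightarrow> median3 a b k = min a b"
  by (auto simp: median3_def min_def max_def)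

lemma median3_eq_max: "max a b \<le> k \<Longrightarrow> median3 a b k = max a b"
  by (auto simp: median3_def min_def max_def)

lemma mult_min_eq_median3:
  fixes p c d B :: "'a::linordered_idom"
  assumes "\<bar>c\<bar> \<le> B" "\<bar>d\<bar> \<le> B"
  shows "p * min c d = median3 (p * c) (p * d) (- (p * B))"
proof (cases "p \<ge> 0")
  case True
  have "- (p * B) \<le> min (p * c) (p * d)"
    using assms True mult_left_mono[of "-B" _ p] by (auto simp: abs_le_iff)
  then show ?thesis using True by (simp add: min_mult_distrib_left median3_eq_min)
next
  case False
  have "max (p * c) (p * d) \<le> - (p * B)"
    using assms False mult_left_mono_neg[of "-B" _ p] by (auto simp: abs_le_iff)
  then show ?thesis using False by (simp add: min_mult_distrib_left median3_eq_max)
qed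

lemma mult_max_eq_median3:
  fixes p c d B :: "'a::linordered_idom"
  assumes "\<bar>c\<bar> \<le> B" "\<bar>d\<bar> \<le> B"
  shows "p * max c d = median3 (p * c) (p * d) (p * B)"
proof (cases "p \<ge> 0")
  case True
  have "max (p * c) (p * d) \<le> p * B"
    using assms True mult_left_mono[of _ B p] by (auto simp: abs_le_iff)
  then show ?thesis using True by (simp add: max_mult_distrib_left median3_eq_max)
next
  case False
  have "p * B \<le> min (p * c) (p * d)"
    using assms False mult_left_mono_neg[of _ B p] by (auto simp: abs_le_iff)
  then show ?thesis using False by (simp add: max_mult_distrib_left median3_eq_min)
qed

lemma abs_le_square_plus_one: "\<bar>t\<bar> \<le> t * t + (1::'a::linordered_idom)"
proof (cases "\<bar>t\<bar> \<le> 1")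
  case True
  then show ?thesis using zero_le_square[of t] by (meson add_increasing order_trans)
next
  case False
  then have "\<bar>t\<bar> * 1 \<le> \<bar>t\<bar> * \<bar>t\<bar>" by (intro mult_left_mono) auto
  then show ?thesis by (simp add: add_increasing2)
qed

locale function_ring =
  fixes P :: "('a \<Rightarrow> 'b::linordered_idom) set"
  assumes const: "(\<lambda>x. c) \<in> P"
    and add: "p \<in> P \<Longrightarrow> q \<in> P \<Longrightarrow> (\<lambda>x. p x + q x) \<in> P"
    and mult: "p \<in> P \<Longrightarrow> q \<in> P \<Longrightarrow> (\<lambda>x. p x * q x) \<in> P"
begin

lemma uminus: "p \<in> P \<Longrightarrow> (\<lambda>x. - p x) \<in> P"
  using mult[OF const[of "-1"]] by simp

inductive_set lattice_closure :: "('a \<Rightarrow> 'b) set" where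
  base: "p \<in> P \<Longrightarrow> p \<in> lattice_closure"
| min: "f \<in> lattice_closure \<Longrightarrow> g \<in> lattice_closure
        \<Longrightarrow> (\<lambda>x. min (f x) (g x)) \<in> lattice_closure"
| max: "f \<in> lattice_closure \<Longrightarrow> g \<in> lattice_closure
        \<Longrightarrow> (\<lambda>x. max (f x) (g x)) \<in> lattice_closure"

lemma lattice_closure_const: "(\<lambda>x. c) \<in> lattice_closure"
  by (intro lattice_closure.base const)

lemma lattice_closure_median3:
  "f \<in> lattice_closure \<Longrightarrow> g \<in> lattice_closure \<Longrightarrow> h \<in> lattice_closure
    \<Longrightarrow> (\<lambda>x. median3 (f x) (g x) (h x)) \<in> lattice_closure"
  unfolding median3_def by (intro lattice_closure.min lattice_closure.max)

lemma lattice_closure_uminus: "f \<in> lattice_closure \<Longrightarrow> (\<lambda>x. - f x) \<in> lattice_closure"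
proof (induction f rule: lattice_closure.induct)
  case (base p)
  then show ?case by (intro lattice_closure.base uminus)
next
  case (min f g)
  then show ?case using lattice_closure.max[OF min.IH] by (simp add: minus_min_eq_max)
next
  case (max f g)
  then show ?case using lattice_closure.min[OF max.IH] by (simp add: minus_max_eq_min)
qed

lemma lattice_closure_add_base:
  "g \<in> lattice_closure \<Longrightarrow> p \<in> P \<Longrightarrow> (\<lambda>x. p x + g x) \<in> lattice_closure"
proof (induction g rule: lattice_closure.induct)
  case (base q)
  then show ?case by (intro lattice_closure.base add)
next
  case (min f g)
  then show ?case using lattice_closure.min[OF min.IH] by (simp add: min_add_distrib_right)
next
  case (max f g)
  then show ?case using lattice_closure.max[OF max.IH] by (simp add: max_add_distrib_right)
qed

lemma lattice_closure_add:
  "f \<in> lattice_closure \<Longrightarrow> g \<in> lattice_closure \<Longrightarrow> (\<lambda>x. f x + g x) \<in> lattice_closure"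
proof (induction f rule: lattice_closure.induct)
  case (base p)
  show ?case by (rule lattice_closure_add_base[OF base.prems base.hyps])
next
  case (min f1 f2)
  then show ?case using lattice_closure.min[OF min.IH] by (simp add: min_add_distrib_left)
next
  case (max f1 f2)
  then show ?case using lattice_closure.max[OF max.IH] by (simp add: max_add_distrib_left)
qed

lemma common_bound:
  assumes "B\<^sub>f \<in> P" "\<And>x. \<bar>f x\<bar> \<le> B\<^sub>f x" and "B\<^sub>g \<in> P" "\<And>x. \<bar>g x\<bar> \<le> B\<^sub>g x"
  obtains B where "B \<in> P" "\<And>x. \<bar>f x\<bar> \<le> B x" "\<And>x. \<bar>g x\<bar> \<le> B x"
proof
  show "(\<lambda>x. B\<^sub>f x + B\<^sub>g x) \<in> P" using assms by (intro add)
  fix x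
  have "0 \<le> B\<^sub>f x" "0 \<le> B\<^sub>g x" using assms(2,4)[of x] abs_ge_zero order_trans by blast+
  then show "\<bar>f x\<bar> \<le> B\<^sub>f x + B\<^sub>g x" "\<bar>g x\<bar> \<le> B\<^sub>f x + B\<^sub>g x"
    using assms(2,4)[of x] by (simp_all add: add_increasing add_increasing2)
qed

lemma lattice_closure_bounded:
  assumes "f \<in> lattice_closure"
  obtains B where "B \<in> P" "\<And>x. \<bar>f x\<bar> \<le> B x"
  using assms
proof (induction f arbitrary: thesis rule: lattice_closure.induct)
  case (base p)
  show ?case
  proof (rule base.prems)
    show "(\<lambda>x. p x * p x + 1) \<in> P" using base.hyps by (intro add mult const)
  qed (rule abs_le_square_plus_one)
next
  case (min f g)
  obtain B where "B \<in> P" "\<And>x. \<bar>f x\<bar> \<le> B x" "\<And>x. \<bar>g x\<bar> \<le> B x"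
    using min.IH common_bound by metis
  then show ?case by (intro min.prems) (auto simp: min_def)
next
  case (max f g)
  obtain B where "B \<in> P" "\<And>x. \<bar>f x\<bar> \<le> B x" "\<And>x. \<bar>g x\<bar> \<le> B x"
    using max.IH common_bound by metis
  then show ?case by (intro max.prems) (auto simp: max_def)
qed

lemma lattice_closure_common_bound:
  assumes "f \<in> lattice_closure" "g \<in> lattice_closure"
  obtains B where "B \<in> P" "\<And>x. \<bar>f x\<bar> \<le> B x" "\<And>x. \<bar>g x\<bar> \<le> B x"
  using lattice_closure_bounded[OF assms(1)] lattice_closure_bounded[OF assms(2)] common_bound
  by metis

lemma lattice_closure_mult_base:
  "g \<in> lattice_closure \<Longrightarrow> p \<in> P \<Longrightarrow> (\<lambda>x. p x * g x) \<in> lattice_closure"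
proof (induction g arbitrary: p rule: lattice_closure.induct)
  case (base q)
  then show ?case by (intro lattice_closure.base mult)
next
  case (min c d)
  obtain B where B: "B \<in> P" "\<And>x. \<bar>c x\<bar> \<le> B x" "\<And>x. \<bar>d x\<bar> \<le> B x"
    using lattice_closure_common_bound[OF min.hyps] by blast
  have "(\<lambda>x. p x * min (c x) (d x)) = (\<lambda>x. median3 (p x * c x) (p x * d x) (- (p x * B x)))"
    using B by (intro ext mult_min_eq_median3)
  moreover have "(\<lambda>x. - (p x * B x)) \<in> lattice_closure"
    using min.prems B by (intro lattice_closure.base uminus mult)
  ultimately show ?case
    using min.IH min.prems by (simp add: lattice_closure_median3)
next
  case (max c d)
  obtain B where B: "B \<in> P" "\<And>x. \<bar>c x\<bar> \<le> B x" "\<And>x. \<bar>d x\<bar> \<le> B x"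
    using lattice_closure_common_bound[OF max.hyps] by blast
  have "(\<lambda>x. p x * max (c x) (d x)) = (\<lambda>x. median3 (p x * c x) (p x * d x) (p x * B x))"
    using B by (intro ext mult_max_eq_median3)
  moreover have "(\<lambda>x. p x * B x) \<in> lattice_closure"
    using max.prems B by (intro lattice_closure.base mult)
  ultimately show ?case
    using max.IH max.prems by (simp add: lattice_closure_median3)
qed

lemma lattice_closure_mult:
  "f \<in> lattice_closure \<Longrightarrow> g \<in> lattice_closure \<Longrightarrow> (\<lambda>x. f x * g x) \<in> lattice_closure"
proof (induction f rule: lattice_closure.induct)
  case (base p)
  show ?case by (rule lattice_closure_mult_base[OF base.prems base.hyps])
next
  case (min c d)
  obtain B where B: "B \<in> P" "\<And>x. \<bar>c x\<bar> \<le> B x" "\<And>x. \<bar>d x\<bar> \<le> B x"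
    using lattice_closure_common_bound[OF min.hyps] by blast
  have "(\<lambda>x. min (c x) (d x) * g x) = (\<lambda>x. median3 (c x * g x) (d x * g x) (- (B x * g x)))"
    using mult_min_eq_median3[OF B(2,3)] by (simp add: fun_eq_iff mult.commute)
  moreover have "(\<lambda>x. - (B x * g x)) \<in> lattice_closure"
    using lattice_closure_mult_base[OF min.prems B(1)] by (rule lattice_closure_uminus)
  ultimately show ?case
    using min.IH min.prems by (simp add: lattice_closure_median3)
next
  case (max c d)
  obtain B where B: "B \<in> P" "\<And>x. \<bar>c x\<bar> \<le> B x" "\<And>x. \<bar>d x\<bar> \<le> B x"
    using lattice_closure_common_bound[OF max.hyps] by blast
  have "(\<lambda>x. max (c x) (d x) * g x) = (\<lambda>x. median3 (c x * g x) (d x * g x) (B x * g x))"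
    using mult_max_eq_median3[OF B(2,3)] by (simp add: fun_eq_iff mult.commute)
  moreover have "(\<lambda>x. B x * g x) \<in> lattice_closure"
    by (rule lattice_closure_mult_base[OF max.prems B(1)])
  ultimately show ?case
    using max.IH max.prems by (simp add: lattice_closure_median3)
qed

end

lemma min_mult_eq_zero:
  fixes a b c :: "'a::linordered_idom"
  assumes "0 \<le> a" "0 \<le> b" "0 \<le> c" "min b c = 0"
  shows "min (a * b) c = 0" and "min (b * a) c = 0"
proof -
  have "b = 0 \<or> c = 0" using assms by (auto simp: min_def split: if_splits)
  then show "min (a * b) c = 0" "min (b * a) c = 0" using assms by auto
qed

lemma f_ring_pointwise:
  fixes S :: "('a \<Rightarrow> 'b::linordered_idom) set"
  assumes "(\<lambda>x. 0) \<in> S" "(\<lambda>x. 1) \<in> S"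
    and "\<And>f. f \<in> S \<Longrightarrow> (\<lambda>x. - f x) \<in> S"
    and "\<And>f g. f \<in> S \<Longrightarrow> g \<in> S \<Longrightarrow> (\<lambda>x. f x + g x) \<in> S"
    and "\<And>f g. f \<in> S \<Longrightarrow> g \<in> S \<Longrightarrow> (\<lambda>x. f x * g x) \<in> S"
    and "\<And>f g. f \<in> S \<Longrightarrow> g \<in> S \<Longrightarrow> (\<lambda>x. min (f x) (g x)) \<in> S"
    and "\<And>f g. f \<in> S \<Longrightarrow> g \<in> S \<Longrightarrow> (\<lambda>x. max (f x) (g x)) \<in> S"
  shows "f_ring S (\<lambda>f g x. f x + g x) (\<lambda>f g x. f x * g x) (\<lambda>x. 0) (\<lambda>x. 1)
           (\<lambda>f x. - f x) (\<lambda>f g x. min (f x) (g x)) (\<lambda>f g x. max (f x) (g x))"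
  unfolding f_ring_def l_ring_def using assms
  by (auto simp: fun_eq_iff algebra_simps min.assoc max.assoc
      min.absorb_iff1[symmetric] min_add_distrib_left[symmetric] min_mult_eq_zero)

interpretation poly_fun: function_ring "poly_fun n" for n
  by unfold_locales (fact poly_fun.intros)+

lemma ISD_eq_lattice_closure: "ISD n = poly_fun.lattice_closure n"
proof (intro set_eqI iffI)
  fix f
  show "f \<in> ISD n \<Longrightarrow> f \<in> poly_fun.lattice_closure n"
    by (induction rule: ISD.induct) (auto intro: poly_fun.lattice_closure.intros)
  show "f \<in> poly_fun.lattice_closure n \<Longrightarrow> f \<in> ISD n"
    by (induction rule: poly_fun.lattice_closure.induct) (auto intro: ISD.intros)
qed

theorem mainTheorem7:
  fixes n :: nat
  shows "f_ring (ISD n) (\<lambda>f g x. f x + g x) (\<lambda>f g x. f x * g x) (\<lambda>x. 0) (\<lambda>x. 1)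
           (\<lambda>f x. - f x) (\<lambda>f g x. min (f x) (g x)) (\<lambda>f g x. max (f x) (g x))
         \<and> (\<forall>f\<in>ISD n. \<forall>g\<in>ISD n. (\<lambda>x. f x + g x) \<in> ISD n \<and> (\<lambda>x. f x * g x) \<in> ISD n)"
  unfolding ISD_eq_lattice_closure
  by (intro conjI ballI f_ring_pointwise poly_fun.lattice_closure_const
      poly_fun.lattice_closure_uminus poly_fun.lattice_closure_add poly_fun.lattice_closure_mult
      poly_fun.lattice_closure.min poly_fun.lattice_closure.max)

end
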